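(* Let $c_3(\alpha)=2\int_0^\infty\ln(z)[1-G_\alpha(z)]g_\alpha(z)\,dz$ and $c_1(\alpha)=\psi(\alpha)$. For estimating $H_M(\underline\theta)$ under squared error loss: (1) every estimator $d_c$ with $c\in[c_3(\alpha),c_1(\alpha)]$ is admissible within the class $\mathcal M_1$; (2) every estimator $d_c$ with $c\in(-\infty,c_3(\alpha))\cup(c_1(\alpha),\infty)$ is inadmissible; (3) if $-\infty<b<c\le c_3(\alpha)$ or $c_1(\alpha)\le c<b<\infty$, then $R_\rho(d_c)<R_\rho(d_b)$ for all $\rho\in(0,1]$.
   Context: Fix a known $\alpha>0$. $X_1,X_2$ are independent, $X_i$ having density $f(x\mid\theta_i)=\frac{x^{\alpha-1}e^{-x/\theta_i}}{\Gamma(\alpha)\theta_i^{\alpha}}$, $x>0$, with unknown $\underline\theta=(\theta_1,\theta_2)\in\Theta=(0,\infty)^2$. $Z_1=\min\{X_1,X_2\}$, $Z_2=\max\{X_1,X_2\}$. $H_M(\underline\theta)=\ln\theta_1\, I(X_1\le X_2)+\ln\theta_2\, I(X_1>X_2)$. $\psi$ is the digamma function; $G_\alpha,g_\alpha$ are the distribution function and density of the gamma distribution with shape $\alpha$, scale $1$. For $c\in\mathbb R$, $d_c(X_1,X_2)=\ln Z_1-c$ and $\mathcal M_1=\{d_c:c\in\mathbb R\}$. Risk: $R(\underline\theta,d)=\mathbb E_{\underline\theta}(d(X_1,X_2)-H_M(\underline\theta))^2$; for $d_c$ it depends on $\underline\theta$ only through $\rho=\min\{\theta_1,\theta_2\}/\max\{\theta_1,\theta_2\}\in(0,1]$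 and is written $R_\rho(d_c)$. $d'$ dominates $d$ if its risk is $\le$ for all $\underline\theta$ and $<$ for some; $d$ is inadmissible if some estimator dominates it; $d\in\mathcal M_1$ is admissible within $\mathcal M_1$ if no member of $\mathcal M_1$ dominates it. *)

theory Defs
  imports "HOL-Probability.Probability"
begin

definition gamma_dens :: "real \<Rightarrow> real \<Rightarrow> real \<Rightarrow> real" where
  "gamma_dens \<alpha> \<theta> x =
     (if 0 < x then x powr (\<alpha> - 1) * exp (- x / \<theta>) / (Gamma \<alpha> * \<theta> powr \<alpha>) else 0)"

definition g_std :: "real \<Rightarrow> real \<Rightarrow> real" where
  "g_std \<alpha> z = gamma_dens \<alpha> 1 z"

definition G_std :: "real \<Rightarrow> real \<Rightarrow> real" where
  "G_std \<alpha> z = (LBINT t:{..z}. g_std \<alpha> t)"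

definition c3 :: "real \<Rightarrow> real" where
  "c3 \<alpha> = 2 * (LBINT z:{0<..}. ln z * (1 - G_std \<alpha> z) * g_std \<alpha> z)"

definition c1 :: "real \<Rightarrow> real" where
  "c1 \<alpha> = Digamma \<alpha>"

definition joint :: "real \<Rightarrow> real \<times> real \<Rightarrow> (real \<times> real) measure" where
  "joint \<alpha> \<theta> = density (lborel \<Otimes>\<^sub>M lborel)
     (\<lambda>(x1, x2). ennreal (gamma_dens \<alpha> (fst \<theta>) x1 * gamma_dens \<alpha> (snd \<theta>) x2))"

definition H_M :: "real \<times> real \<Rightarrow> real \<times> real \<Rightarrow> real" where
  "H_M \<theta> x = (if fst x \<le> snd x then ln (fst \<theta>) else ln (snd \<theta>))"

definition Theta :: "(real \<times> real) set" where
  "Theta = {\<theta>. 0 < fst \<theta> \<and> 0 < snd \<theta>}"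

definition risk :: "real \<Rightarrow> real \<times> real \<Rightarrow> (real \<times> real \<Rightarrow> real) \<Rightarrow> ennreal" where
  "risk \<alpha> \<theta> d = (\<integral>\<^sup>+ x. ennreal ((d x - H_M \<theta> x)\<^sup>2) \<partial>joint \<alpha> \<theta>)"

definition estimator :: "(real \<times> real \<Rightarrow> real) \<Rightarrow> bool" where
  "estimator d \<longleftrightarrow> d \<in> borel_measurable (lborel \<Otimes>\<^sub>M lborel)"

definition dominates :: "real \<Rightarrow> (real \<times> real \<Rightarrow> real) \<Rightarrow> (real \<times> real \<Rightarrow> real) \<Rightarrow> bool" where
  "dominates \<alpha> d' d \<longleftrightarrow>
     (\<forall>\<theta>\<in>Theta. risk \<alpha> \<theta> d' \<le> risk \<alpha> \<theta> d) \<and> (\<exists>\<theta>\<in>Theta. risk \<alpha> \<theta> d' < risk \<alpha> \<theta> d)"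

definition d_c :: "real \<Rightarrow> real \<times> real \<Rightarrow> real" where
  "d_c c x = ln (min (fst x) (snd x)) - c"

definition M1 :: "(real \<times> real \<Rightarrow> real) set" where
  "M1 = range d_c"

definition inadmissible :: "real \<Rightarrow> (real \<times> real \<Rightarrow> real) \<Rightarrow> bool" where
  "inadmissible \<alpha> d \<longleftrightarrow> (\<exists>d'. estimator d' \<and> dominates \<alpha> d' d)"

definition admissible_within_M1 :: "real \<Rightarrow> (real \<times> real \<Rightarrow> real) \<Rightarrow> bool" where
  "admissible_within_M1 \<alpha> d \<longleftrightarrow> d \<in> M1 \<and> \<not> (\<exists>d'\<in>M1. dominates \<alpha> d' d)"

end

theory Submission imports Defs begin

text \<open>
  Writing \<open>X\<^sub>i = \<theta>\<^sub>i Y\<^sub>i\<close> with \<open>Y\<^sub>1, Y\<^sub>2\<close> i.i.d. Gamma(\<alpha>, 1), the loss of \<open>d\<^sub>c\<close> becomes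
  \<open>(W\<^sub>\<theta> - c)\<^sup>2\<close>, where \<open>W\<^sub>\<theta> = ln Y\<^sub>i\<close> for the index \<open>i\<close> at which \<open>\<theta>\<^sub>i Y\<^sub>i\<close> is minimal. Hence
  \<open>R(\<theta>, d\<^sub>c) = Var W\<^sub>\<theta> + (c - m(\<theta>))\<^sup>2\<close> with \<open>m(\<theta>) = E W\<^sub>\<theta>\<close>, so \<open>d\<^sub>c\<close> beats \<open>d\<^sub>b\<close> at \<open>\<theta>\<close> exactly
  when \<open>c\<close> is closer to \<open>m(\<theta>)\<close>. Pointwise \<open>ln (min Y\<^sub>1 Y\<^sub>2) \<le> W\<^sub>\<theta> \<le> ln Y\<^sub>j\<close> for the
  index \<open>j\<close> of the smaller \<open>\<theta>\<^sub>j\<close>, so \<open>m(\<theta>)\<close> lies in \<open>[E ln (min Y\<^sub>1 Y\<^sub>2), E ln Y\<^sub>1] = [c\<^sub>3, \<psi>(\<alpha>)]\<close>;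
  the lower end is attained at \<open>\<theta> = (1, 1)\<close> and the upper end is approached as
  \<open>\<theta>\<^sub>2/\<theta>\<^sub>1 \<rightarrow> \<infinity>\<close>. The identity \<open>E ln Y\<^sub>1 = \<psi>(\<alpha>)\<close> comes from differentiating
  \<open>E Y\<^sub>1\<^sup>h = \<Gamma>(\<alpha> + h)/\<Gamma>(\<alpha>)\<close> at \<open>h = 0\<close>.
\<close>

section \<open>Gamma distributions\<close>

definition gamma_measure :: "real \<Rightarrow> real \<Rightarrow> real measure" where
  "gamma_measure a t = density lborel (\<lambda>x. ennreal (gamma_dens a t x))"

lemma space_gamma_measure [simp]: "space (gamma_measure a t) = UNIV"
  by (simp add: gamma_measure_def)

lemma sets_gamma_measure [simp]: "sets (gamma_measure a t) = sets borel"
  by (simp add: gamma_measure_def)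

lemma measurable_gamma_measure [simp]: "measurable (gamma_measure a t) M = measurable borel M"
  by (rule measurable_cong_sets) simp_all

lemma gamma_dens_nonneg: "0 < a \<Longrightarrow> 0 < t \<Longrightarrow> 0 \<le> gamma_dens a t x"
  by (auto simp: gamma_dens_def intro!: divide_nonneg_pos mult_pos_pos Gamma_real_pos)

lemma borel_measurable_gamma_dens [measurable]: "gamma_dens a t \<in> borel_measurable borel"
  unfolding gamma_dens_def by measurable

lemma nn_integral_Gamma:
  assumes "0 < b"
  shows "(\<integral>\<^sup>+t. ennreal (if 0 < t then t powr (b - 1) * exp (- t) else 0) \<partial>lborel) = ennreal (Gamma b)"
proof -
  have "((\<lambda>t. t powr (b - 1) / exp t) has_integral Gamma b) {0..}"
    using Gamma_integral_real[OF assms] .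
  then have "((\<lambda>t. if t \<in> {0..} then t powr (b - 1) / exp t else 0) has_integral Gamma b) UNIV"
    by (subst has_integral_restrict_UNIV)
  moreover have "(\<lambda>t. if t \<in> {0..} then t powr (b - 1) / exp t else 0)
      = (\<lambda>t::real. if 0 < t then t powr (b - 1) * exp (- t) else 0)"
    by (auto simp: fun_eq_iff exp_minus field_simps)
  ultimately show ?thesis
    by (intro nn_integral_has_integral_lborel) auto
qed

lemma nn_integral_gamma_dens_powr:
  assumes a: "0 < a" and ap: "0 < a + p"
  shows "(\<integral>\<^sup>+x. ennreal (gamma_dens a 1 x * x powr p) \<partial>lborel) = ennreal (Gamma (a + p) / Gamma a)"
proof -
  have Ga: "0 < Gamma a" using a by (simp add: Gamma_real_pos)
  have "gamma_dens a 1 x * x powr p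
      = (if 0 < x then x powr ((a + p) - 1) * exp (- x) else 0) * (1 / Gamma a)" for x
    by (auto simp: gamma_dens_def powr_add[symmetric] exp_minus field_simps)
  then have "(\<lambda>x. ennreal (gamma_dens a 1 x * x powr p))
      = (\<lambda>x. ennreal (if 0 < x then x powr ((a + p) - 1) * exp (- x) else 0) * ennreal (1 / Gamma a))"
    using Ga by (auto simp: fun_eq_iff ennreal_mult[symmetric])
  then have "(\<integral>\<^sup>+x. ennreal (gamma_dens a 1 x * x powr p) \<partial>lborel)
      = (\<integral>\<^sup>+x. ennreal (if 0 < x then x powr ((a + p) - 1) * exp (- x) else 0) \<partial>lborel) * ennreal (1 / Gamma a)"
    by (simp add: nn_integral_multc)
  also have "\<dots> = ennreal (Gamma (a + p) / Gamma a)"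
    using nn_integral_Gamma[OF ap] Ga ap by (simp add: ennreal_mult[symmetric] Gamma_real_pos less_imp_le)
  finally show ?thesis .
qed

lemma prob_space_gamma_measure_1: "0 < a \<Longrightarrow> prob_space (gamma_measure a 1)"
proof (rule prob_spaceI)
  assume a: "0 < a"
  have "(\<lambda>x. ennreal (gamma_dens a 1 x)) = (\<lambda>x. ennreal (gamma_dens a 1 x * x powr 0))"
    by (auto simp: gamma_dens_def fun_eq_iff)
  then show "emeasure (gamma_measure a 1) (space (gamma_measure a 1)) = 1"
    using nn_integral_gamma_dens_powr[of a 0] a Gamma_real_pos[OF a]
    by (simp add: gamma_measure_def emeasure_density)
qed

lemma gamma_measure_scale:
  assumes a: "0 < a" and t: "0 < t"
  shows "gamma_measure a t = distr (gamma_measure a 1) borel (\<lambda>y. t * y)"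
proof (rule measure_eqI)
  fix A assume "A \<in> sets (gamma_measure a t)"
  then have A[measurable]: "A \<in> sets borel" by simp
  have dens: "ennreal \<bar>t\<bar> * ennreal (gamma_dens a t (0 + t * x)) = ennreal (gamma_dens a 1 x)" for x
  proof -
    have "\<bar>t\<bar> * gamma_dens a t (t * x) = gamma_dens a 1 x"
      using t by (auto simp: gamma_dens_def powr_mult zero_less_mult_iff powr_diff field_simps)
    then show ?thesis using t gamma_dens_nonneg[OF a t] by (simp add: ennreal_mult[symmetric])
  qed
  have "emeasure (gamma_measure a t) A = (\<integral>\<^sup>+x. ennreal (gamma_dens a t x) * indicator A x \<partial>lborel)"
    by (simp add: gamma_measure_def emeasure_density)
  also have "\<dots> = ennreal \<bar>t\<bar> * (\<integral>\<^sup>+x. ennreal (gamma_dens a t (0 + t * x)) * indicator A (0 + t * x) \<partial>lborel)"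
    by (rule nn_integral_real_affine) (use t in auto)
  also have "\<dots> = (\<integral>\<^sup>+x. ennreal (gamma_dens a 1 x) * indicator A (t * x) \<partial>lborel)"
    using dens by (subst nn_integral_cmult[symmetric]) (auto simp: mult.assoc[symmetric])
  also have "\<dots> = emeasure (gamma_measure a 1) ((\<lambda>y. t * y) -` A)"
  proof -
    have "(\<lambda>y. t * y) -` A \<inter> space borel \<in> sets borel" by measurable
    then show ?thesis by (simp add: gamma_measure_def emeasure_density indicator_def)
  qed
  also have "\<dots> = emeasure (distr (gamma_measure a 1) borel (\<lambda>y. t * y)) A"
    by (subst emeasure_distr) auto
  finally show "emeasure (gamma_measure a t) A = emeasure (distr (gamma_measure a 1) borel (\<lambda>y. t * y)) A" .
qed simp

lemma prob_space_gamma_measure: "0 < a \<Longrightarrow> 0 < t \<Longrightarrow> prob_space (gamma_measure a t)"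
  by (subst gamma_measure_scale, assumption+, rule prob_space.prob_space_distr[OF prob_space_gamma_measure_1]) auto

lemma AE_gamma_measure_pos: "AE x in gamma_measure a 1. 0 < x"
  unfolding gamma_measure_def by (subst AE_density) (auto simp: gamma_dens_def)

lemma measure_gamma_measure_atMost: "0 < a \<Longrightarrow> measure (gamma_measure a 1) {..z} = G_std a z"
proof -
  assume a: "0 < a"
  have "measure (gamma_measure a 1) {..z} = (\<integral>x. indicator {..z} x \<partial>gamma_measure a 1)"
    by simp
  also have "\<dots> = (\<integral>x. gamma_dens a 1 x *\<^sub>R indicator {..z} x \<partial>lborel)"
    unfolding gamma_measure_def by (rule integral_density) (auto simp: gamma_dens_nonneg[OF a])
  also have "\<dots> = G_std a z"
    unfolding G_std_def set_lebesgue_integral_def g_std_def by (simp add: mult.commute)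
  finally show ?thesis .
qed

lemma borel_measurable_G_std [measurable]: "0 < a \<Longrightarrow> G_std a \<in> borel_measurable borel"
proof (rule borel_measurable_mono)
  assume a: "0 < a"
  interpret G: prob_space "gamma_measure a 1" by (rule prob_space_gamma_measure_1[OF a])
  show "mono (G_std a)"
    by (auto simp: mono_def measure_gamma_measure_atMost[OF a, symmetric] intro!: G.finite_measure_mono)
qed

lemma measure_gamma_measure_atLeast: "0 < a \<Longrightarrow> measure (gamma_measure a 1) {z..} = 1 - G_std a z"
proof -
  assume a: "0 < a"
  interpret G: prob_space "gamma_measure a 1" by (rule prob_space_gamma_measure_1[OF a])
  have "AE x in lborel. x \<in> {z} \<longrightarrow> ennreal (gamma_dens a 1 x) = 0"
    using AE_lborel_singleton[of z] by eventually_elim auto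
  then have "{z} \<in> null_sets (gamma_measure a 1)"
    unfolding gamma_measure_def by (subst null_sets_density_iff) auto
  then have "measure (gamma_measure a 1) {..<z} = measure (gamma_measure a 1) {..z}"
    by (intro measure_eq_AE AE_I'[of "{z}"]) auto
  moreover have "measure (gamma_measure a 1) {z..} = 1 - measure (gamma_measure a 1) {..<z}"
    using G.prob_compl[of "{..<z}"] by (simp add: Compl_eq_Diff_UNIV[symmetric])
  ultimately show ?thesis using measure_gamma_measure_atMost[OF a] by simp
qed

lemma measure_gamma_measure_greaterThan:
  "0 < a \<Longrightarrow> measure (gamma_measure a 1) {z<..} = 1 - G_std a z"
proof -
  assume a: "0 < a"
  interpret G: prob_space "gamma_measure a 1" by (rule prob_space_gamma_measure_1[OF a])
  show ?thesis
    using G.prob_compl[of "{..z}"] measure_gamma_measure_atMost[OF a]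
    by (simp add: Compl_eq_Diff_UNIV[symmetric])
qed

section \<open>Moments of the logarithm\<close>

lemma nn_integral_gamma_measure_powr:
  assumes a: "0 < a" and ap: "0 < a + p"
  shows "(\<integral>\<^sup>+x. ennreal (x powr p) \<partial>gamma_measure a 1) = ennreal (Gamma (a + p) / Gamma a)"
  unfolding gamma_measure_def using nn_integral_gamma_dens_powr[OF a ap]
  by (subst nn_integral_density) (auto simp: ennreal_mult gamma_dens_nonneg[OF a])

lemma
  assumes a: "0 < a" and ap: "0 < a + p"
  shows integrable_gamma_measure_powr: "integrable (gamma_measure a 1) (\<lambda>x. x powr p)"
    and integral_gamma_measure_powr: "(\<integral>x. x powr p \<partial>gamma_measure a 1) = Gamma (a + p) / Gamma a"
proof -
  show "integrable (gamma_measure a 1) (\<lambda>x. x powr p)"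
    by (rule integrableI_nonneg) (auto simp: nn_integral_gamma_measure_powr[OF a ap])
  have "(\<integral>x. x powr p \<partial>gamma_measure a 1) = enn2real (\<integral>\<^sup>+x. ennreal (x powr p) \<partial>gamma_measure a 1)"
    by (rule integral_eq_nn_integral) auto
  then show "(\<integral>x. x powr p \<partial>gamma_measure a 1) = Gamma (a + p) / Gamma a"
    using nn_integral_gamma_measure_powr[OF a ap] a ap by (simp add: Gamma_real_pos less_imp_le)
qed

lemma ln_squared_le_powr:
  fixes x d :: real
  assumes x: "0 < x" and d: "0 < d"
  shows "(ln x)\<^sup>2 \<le> (4 / d\<^sup>2) * (x powr d + x powr (- d))"
proof -
  define u where "u = (d / 2) * ln x"
  have "\<bar>u\<bar>\<^sup>2 \<le> (exp \<bar>u\<bar>)\<^sup>2"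
    using exp_ge_add_one_self[of "\<bar>u\<bar>"] by (intro power_mono) linarith+
  also have "(exp \<bar>u\<bar>)\<^sup>2 = exp (2 * \<bar>u\<bar>)" by (simp add: power2_eq_square exp_add[symmetric])
  also have "\<dots> \<le> exp (2 * u) + exp (- 2 * u)" by (cases "0 \<le> u") auto
  also have "exp (2 * u) + exp (- 2 * u) = x powr d + x powr (- d)"
    using x by (simp add: u_def powr_def)
  finally have "u\<^sup>2 \<le> x powr d + x powr (- d)" by simp
  moreover have "u\<^sup>2 = (d / 2)\<^sup>2 * (ln x)\<^sup>2" by (simp add: u_def power2_eq_square)
  ultimately show ?thesis using d by (simp add: field_simps power2_eq_square)
qed

lemma integrable_gamma_measure_ln_squared:
  assumes a: "0 < a"
  shows "integrable (gamma_measure a 1) (\<lambda>x. (ln x)\<^sup>2)"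
proof (rule Bochner_Integration.integrable_bound)
  let ?d = "a / 2"
  show "integrable (gamma_measure a 1) (\<lambda>x. (4 / ?d\<^sup>2) * (x powr ?d + x powr (- ?d)))"
    using integrable_gamma_measure_powr[OF a, of ?d] integrable_gamma_measure_powr[OF a, of "- ?d"] a
    by auto
  show "AE x in gamma_measure a 1. norm ((ln x)\<^sup>2) \<le> norm ((4 / ?d\<^sup>2) * (x powr ?d + x powr (- ?d)))"
    using AE_gamma_measure_pos[of a]
    by eventually_elim (use ln_squared_le_powr a in force)
qed simp

lemma integrable_gamma_measure_ln:
  assumes a: "0 < a"
  shows "integrable (gamma_measure a 1) ln"
proof (rule Bochner_Integration.integrable_bound)
  show "integrable (gamma_measure a 1) (\<lambda>x. 1 + (ln x)\<^sup>2)"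
    using integrable_gamma_measure_ln_squared[OF a]
      prob_space.finite_measure[OF prob_space_gamma_measure_1[OF a]]
    by (auto intro: finite_measure.integrable_const)
  have "\<bar>u\<bar> \<le> 1 + u\<^sup>2" for u :: real
    using zero_le_power2[of "\<bar>u\<bar> - 1"] zero_le_power2[of u]
    by (simp add: power2_diff power2_abs)
  then show "AE x in gamma_measure a 1. norm (ln x) \<le> norm (1 + (ln x)\<^sup>2)"
    by auto
qed simp

lemma has_field_derivative_LIMSEQ_difference_quotient:
  fixes f :: "real \<Rightarrow> real"
  assumes D: "(f has_field_derivative D) (at x)" and h: "h \<longlonglongrightarrow> 0" and hn: "\<And>n. h n \<noteq> 0"
  shows "(\<lambda>n. (f (x + h n) - f x) / h n) \<longlonglongrightarrow> D"
proof -
  have L: "((\<lambda>y. (f y - f x) / (y - x)) \<longlongrightarrow> D) (at x)"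
    using D by (simp add: has_field_derivative_iff)
  have "filterlim (\<lambda>n. x + h n) (at x) sequentially"
    using tendsto_add[OF tendsto_const h] hn by (intro filterlim_atI) auto
  from filterlim_compose[OF L this] show ?thesis by (simp add: o_def)
qed

text \<open>Convexity of \<open>h \<mapsto> x powr h\<close> makes the difference quotients at \<open>0\<close> monotone in \<open>h\<close>.\<close>
lemma powr_difference_quotient_bounds:
  fixes x h d :: real
  assumes x: "0 < x" and h: "0 < h" "h \<le> d"
  shows "ln x \<le> (x powr h - 1) / h" "(x powr h - 1) / h \<le> (x powr d - 1) / d"
proof -
  have "ln (x powr h) \<le> x powr h - 1" using x by (intro ln_le_minus_one) simp
  then show "ln x \<le> (x powr h - 1) / h" using x h by (simp add: ln_powr field_simps)
  define t where "t = h / d"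
  have t: "0 \<le> t" "t \<le> 1" using h by (auto simp: t_def)
  have "exp ((1 - t) *\<^sub>R 0 + t *\<^sub>R (d * ln x)) \<le> (1 - t) * exp 0 + t * exp (d * ln x)"
    by (rule convex_onD[OF exp_convex]) (use t in auto)
  moreover have "t * (d * ln x) = h * ln x" using h by (simp add: t_def)
  ultimately have "x powr h \<le> (1 - t) + t * x powr d"
    using x by (simp add: powr_def mult.commute)
  then have "x powr h - 1 \<le> t * (x powr d - 1)" by (simp add: algebra_simps)
  then show "(x powr h - 1) / h \<le> (x powr d - 1) / d" using h by (simp add: t_def field_simps)
qed

lemma integral_gamma_measure_powr_difference_quotient_LIMSEQ:
  assumes a: "0 < a" and h0: "h \<longlonglongrightarrow> 0" and h: "\<And>n. 0 < h n" "\<And>n. h n \<le> d" and d: "d < a"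
  shows "(\<lambda>n. \<integral>x. (x powr h n - 1) / h n \<partial>gamma_measure a 1) \<longlonglongrightarrow> (\<integral>x. ln x \<partial>gamma_measure a 1)"
proof (rule integral_dominated_convergence[where w = "\<lambda>x. \<bar>ln x\<bar> + \<bar>(x powr d - 1) / d\<bar>"])
  have "0 < d" using h(1)[of 0] h(2)[of 0] by linarith
  then show "integrable (gamma_measure a 1) (\<lambda>x. \<bar>ln x\<bar> + \<bar>(x powr d - 1) / d\<bar>)"
    using integrable_gamma_measure_ln[OF a] integrable_gamma_measure_powr[OF a, of d] d
      prob_space.finite_measure[OF prob_space_gamma_measure_1[OF a]]
    by (intro Bochner_Integration.integrable_add integrable_abs integrable_divide
        Bochner_Integration.integrable_diff finite_measure.integrable_const) auto
  show "AE x in gamma_measure a 1. (\<lambda>n. (x powr h n - 1) / h n) \<longlonglongrightarrow> ln x"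
    using AE_gamma_measure_pos[of a]
  proof eventually_elim
    case (elim x)
    have "((\<lambda>y. exp (y * ln x)) has_field_derivative exp (0 * ln x) * (1 * ln x)) (at 0)"
      by (auto intro!: derivative_eq_intros)
    then have "((\<lambda>y. x powr y) has_field_derivative ln x) (at 0)"
      using elim by (simp add: powr_def mult.commute)
    from has_field_derivative_LIMSEQ_difference_quotient[OF this h0] h(1) elim
    show ?case by (simp add: less_imp_neq[symmetric])
  qed
  show "AE x in gamma_measure a 1. norm ((x powr h n - 1) / h n) \<le> \<bar>ln x\<bar> + \<bar>(x powr d - 1) / d\<bar>" for n
    using AE_gamma_measure_pos[of a]
  proof eventually_elim
    case (elim x)
    have "\<bar>v\<bar> \<le> \<bar>l\<bar> + \<bar>u\<bar>" if "l \<le> v" "v \<le> u" for l v u :: real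
      using that by linarith
    from this[OF powr_difference_quotient_bounds[OF elim h(1)[of n] h(2)[of n]]] show ?case
      by (simp only: real_norm_def)
  qed
qed auto

lemma integral_gamma_measure_ln: "0 < a \<Longrightarrow> (\<integral>x. ln x \<partial>gamma_measure a 1) = Digamma a"
proof -
  assume a: "0 < a"
  interpret G: prob_space "gamma_measure a 1" by (rule prob_space_gamma_measure_1[OF a])
  define h where "h n = a / 2 / real (Suc n)" for n
  have h: "0 < h n" "h n \<le> a / 2" for n using a by (auto simp: h_def field_simps)
  have h0: "h \<longlonglongrightarrow> 0" unfolding h_def using LIMSEQ_Suc[OF lim_const_over_n[of "a / 2"]] by simp
  have Ga: "0 < Gamma a" using a by (simp add: Gamma_real_pos)
  have quotient: "(\<integral>x. (x powr h n - 1) / h n \<partial>gamma_measure a 1)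
      = (Gamma (a + h n) - Gamma a) / h n / Gamma a" for n
  proof -
    have "(\<integral>x. (x powr h n - 1) / h n \<partial>gamma_measure a 1) = ((\<integral>x. x powr h n \<partial>gamma_measure a 1) - 1) / h n"
      using integrable_gamma_measure_powr[OF a, of "h n"] h[of n] a by (simp add: G.prob_space[simplified])
    also have "\<dots> = (Gamma (a + h n) / Gamma a - 1) / h n"
      using integral_gamma_measure_powr[OF a, of "h n"] h[of n] a by simp
    also have "\<dots> = (Gamma (a + h n) - Gamma a) / h n / Gamma a"
      using Ga by (simp add: field_simps)
    finally show ?thesis .
  qed
  have "(Gamma has_field_derivative Gamma a * Digamma a) (at a)"
    by (rule has_field_derivative_Gamma) (use a nonpos_Ints_nonpos in force)
  from has_field_derivative_LIMSEQ_difference_quotient[OF this h0] h(1)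
  have "(\<lambda>n. (Gamma (a + h n) - Gamma a) / h n) \<longlonglongrightarrow> Gamma a * Digamma a"
    by (simp add: less_imp_neq[symmetric])
  then have "(\<lambda>n. (Gamma (a + h n) - Gamma a) / h n / Gamma a) \<longlonglongrightarrow> Gamma a * Digamma a / Gamma a"
    using Ga by (intro tendsto_divide) auto
  then have "(\<lambda>n. \<integral>x. (x powr h n - 1) / h n \<partial>gamma_measure a 1) \<longlonglongrightarrow> Digamma a"
    unfolding quotient using Ga by simp
  moreover have "a / 2 < a" using a by simp
  ultimately show ?thesis
    using LIMSEQ_unique integral_gamma_measure_powr_difference_quotient_LIMSEQ[OF a h0 h] by blast
qed

section \<open>The joint law of the sample\<close>

abbreviation std_joint :: "real \<Rightarrow> (real \<times> real) measure" where
  "std_joint a \<equiv> joint a (1, 1)"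

lemma joint_eq_pair_measure:
  assumes a: "0 < a" and t1: "0 < t1" and t2: "0 < t2"
  shows "joint a (t1, t2) = gamma_measure a t1 \<Otimes>\<^sub>M gamma_measure a t2"
proof -
  interpret G2: prob_space "gamma_measure a t2" by (rule prob_space_gamma_measure[OF a t2])
  have "gamma_measure a t1 \<Otimes>\<^sub>M gamma_measure a t2 = density (lborel \<Otimes>\<^sub>M lborel)
      (\<lambda>(x, y). ennreal (gamma_dens a t1 x) * ennreal (gamma_dens a t2 y))"
    unfolding gamma_measure_def
    by (rule pair_measure_density) (use G2.sigma_finite_measure_axioms in \<open>auto simp: gamma_measure_def intro: lborel.sigma_finite_measure_axioms\<close>)
  also have "\<dots> = joint a (t1, t2)"
    unfolding joint_def using gamma_dens_nonneg[OF a t1] gamma_dens_nonneg[OF a t2]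
    by (intro density_cong) (auto simp: ennreal_mult)
  finally show ?thesis by simp
qed

lemma joint_eq_distr_std_joint:
  assumes a: "0 < a" and t1: "0 < t1" and t2: "0 < t2"
  shows "joint a (t1, t2) = distr (std_joint a) (borel \<Otimes>\<^sub>M borel) (\<lambda>(x, y). (t1 * x, t2 * y))"
proof -
  interpret G2: prob_space "gamma_measure a t2" by (rule prob_space_gamma_measure[OF a t2])
  have "joint a (t1, t2) = distr (gamma_measure a 1) borel (\<lambda>y. t1 * y) \<Otimes>\<^sub>M distr (gamma_measure a 1) borel (\<lambda>y. t2 * y)"
    using joint_eq_pair_measure[OF a t1 t2] gamma_measure_scale[OF a t1] gamma_measure_scale[OF a t2] by simp
  also have "\<dots> = distr (gamma_measure a 1 \<Otimes>\<^sub>M gamma_measure a 1) (borel \<Otimes>\<^sub>M borel) (\<lambda>(x, y). (t1 * x, t2 * y))"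
    by (rule pair_measure_distr) (use G2.sigma_finite_measure_axioms gamma_measure_scale[OF a t2] in auto)
  finally show ?thesis using joint_eq_pair_measure[OF a, of 1 1] by simp
qed

lemma sets_std_joint: "sets (std_joint a) = sets (borel \<Otimes>\<^sub>M borel)"
  by (simp add: joint_def)

lemma prob_space_std_joint: "0 < a \<Longrightarrow> prob_space (std_joint a)"
  by (simp add: joint_eq_pair_measure prob_space_gamma_measure_1 prob_space_pair)

lemma AE_std_joint_pos: "AE y in std_joint a. 0 < fst y \<and> 0 < snd y"
  unfolding joint_def by (subst AE_density) (auto simp: gamma_dens_def split: prod.splits)

lemma distr_pair_snd:
  assumes "prob_space N" "prob_space M"
  shows "distr (N \<Otimes>\<^sub>M M) M snd = M"
proof (intro measure_eqI)
  interpret N: prob_space N by fact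
  interpret M: prob_space M by fact
  interpret pair_sigma_finite N M ..
  fix A assume A: "A \<in> sets (distr (N \<Otimes>\<^sub>M M) M snd)"
  then have "emeasure (distr (N \<Otimes>\<^sub>M M) M snd) A = emeasure (N \<Otimes>\<^sub>M M) (space N \<times> A)"
    by (auto simp: emeasure_distr space_pair_measure dest: sets.sets_into_space intro!: arg_cong2[where f = emeasure])
  with A show "emeasure (distr (N \<Otimes>\<^sub>M M) M snd) A = emeasure M A"
    by (simp add: M.emeasure_pair_measure_Times N.emeasure_space_1)
qed simp

lemma
  fixes f :: "real \<Rightarrow> real"
  assumes a: "0 < a" and f[measurable]: "f \<in> borel_measurable borel"
    and int: "integrable (gamma_measure a 1) f"
  shows integrable_std_joint_fst: "integrable (std_joint a) (\<lambda>y. f (fst y))"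
    and integral_std_joint_fst: "(\<integral>y. f (fst y) \<partial>std_joint a) = (\<integral>x. f x \<partial>gamma_measure a 1)"
    and integrable_std_joint_snd: "integrable (std_joint a) (\<lambda>y. f (snd y))"
    and integral_std_joint_snd: "(\<integral>y. f (snd y) \<partial>std_joint a) = (\<integral>x. f x \<partial>gamma_measure a 1)"
proof -
  interpret G: prob_space "gamma_measure a 1" by (rule prob_space_gamma_measure_1[OF a])
  have Q: "std_joint a = gamma_measure a 1 \<Otimes>\<^sub>M gamma_measure a 1"
    using joint_eq_pair_measure[OF a, of 1 1] by simp
  have "distr (std_joint a) borel fst = gamma_measure a 1" "distr (std_joint a) borel snd = gamma_measure a 1"
    using G.distr_pair_fst[of "gamma_measure a 1"] distr_pair_snd[OF G.prob_space_axioms G.prob_space_axioms]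
    by (simp_all add: Q cong: distr_cong)
  moreover have "fst \<in> measurable (std_joint a) borel" "snd \<in> measurable (std_joint a) borel"
    by (simp_all add: joint_def)
  ultimately show "integrable (std_joint a) (\<lambda>y. f (fst y))" "integrable (std_joint a) (\<lambda>y. f (snd y))"
    "(\<integral>y. f (fst y) \<partial>std_joint a) = (\<integral>x. f x \<partial>gamma_measure a 1)"
    "(\<integral>y. f (snd y) \<partial>std_joint a) = (\<integral>x. f x \<partial>gamma_measure a 1)"
    using int integrable_distr_eq[OF _ f] integral_distr[OF _ f] by metis+
qed

lemma integrable_std_joint_if_ln_bounded:
  fixes f :: "real \<times> real \<Rightarrow> real"
  assumes a: "0 < a" and f[measurable]: "f \<in> borel_measurable (borel \<Otimes>\<^sub>M borel)"
    and bound: "\<And>y. \<bar>f y\<bar> \<le> \<bar>ln (fst y)\<bar> + \<bar>ln (snd y)\<bar>"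
  shows "integrable (std_joint a) f" "integrable (std_joint a) (\<lambda>y. (f y)\<^sup>2)"
proof -
  have fm[measurable]: "f \<in> borel_measurable (std_joint a)"
    using f measurable_cong_sets[OF sets_std_joint refl] by blast
  note ln = integrable_gamma_measure_ln[OF a] integrable_gamma_measure_ln_squared[OF a]
  show "integrable (std_joint a) f"
  proof (rule Bochner_Integration.integrable_bound[OF _ fm])
    show "integrable (std_joint a) (\<lambda>y. \<bar>ln (fst y)\<bar> + \<bar>ln (snd y)\<bar>)"
      using integrable_std_joint_fst[OF a _ ln(1)] integrable_std_joint_snd[OF a _ ln(1)] by auto
  qed (use bound in auto)
  show "integrable (std_joint a) (\<lambda>y. (f y)\<^sup>2)"
  proof (rule Bochner_Integration.integrable_bound)
    show "integrable (std_joint a) (\<lambda>y. 2 * (ln (fst y))\<^sup>2 + 2 * (ln (snd y))\<^sup>2)"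
      using integrable_std_joint_fst[OF a _ ln(2)] integrable_std_joint_snd[OF a _ ln(2)] by auto
    have "(f y)\<^sup>2 \<le> 2 * (ln (fst y))\<^sup>2 + 2 * (ln (snd y))\<^sup>2" for y
    proof -
      have "(f y)\<^sup>2 \<le> (\<bar>ln (fst y)\<bar> + \<bar>ln (snd y)\<bar>)\<^sup>2"
        using bound[of y] by (metis abs_ge_zero power2_abs power_mono)
      also have "\<dots> \<le> 2 * (ln (fst y))\<^sup>2 + 2 * (ln (snd y))\<^sup>2"
        using zero_le_power2[of "\<bar>ln (fst y)\<bar> - \<bar>ln (snd y)\<bar>"] by (simp add: power2_sum power2_diff)
      finally show ?thesis .
    qed
    then show "AE y in std_joint a. norm ((f y)\<^sup>2) \<le> norm (2 * (ln (fst y))\<^sup>2 + 2 * (ln (snd y))\<^sup>2)"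
      by auto
  qed simp
qed

section \<open>Reduction of the risk\<close>

text \<open>
  Under \<open>\<theta> = t\<close> the sample is \<open>(t\<^sub>1 y\<^sub>1, t\<^sub>2 y\<^sub>2)\<close> with \<open>y\<close> drawn from \<open>std_joint\<close>,
  and \<open>d_c c - H_M t\<close> evaluated there equals \<open>ln_selected t y - c\<close>.
\<close>
definition ln_selected :: "real \<times> real \<Rightarrow> real \<times> real \<Rightarrow> real" where
  "ln_selected t y = (if fst t * fst y \<le> snd t * snd y then ln (fst y) else ln (snd y))"

definition mean_ln_selected :: "real \<Rightarrow> real \<times> real \<Rightarrow> real" where
  "mean_ln_selected a t = (\<integral>y. ln_selected t y \<partial>std_joint a)"

lemma borel_measurable_ln_selected [measurable]: "ln_selected t \<in> borel_measurable (borel \<Otimes>\<^sub>M borel)"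
  unfolding ln_selected_def by measurable

lemma
  assumes "0 < a"
  shows integrable_ln_selected: "integrable (std_joint a) (ln_selected t)"
    and integrable_ln_selected_squared: "integrable (std_joint a) (\<lambda>y. (ln_selected t y)\<^sup>2)"
  using integrable_std_joint_if_ln_bounded[OF assms borel_measurable_ln_selected]
  by (auto simp: ln_selected_def)

lemma risk_d_c_eq_nn_integral:
  assumes a: "0 < a" and t: "t \<in> Theta"
  shows "risk a t (d_c c) = (\<integral>\<^sup>+y. ennreal ((ln_selected t y - c)\<^sup>2) \<partial>std_joint a)"
proof -
  obtain t1 t2 where tt: "t = (t1, t2)" and t1: "0 < t1" and t2: "0 < t2"
    using t by (cases t) (auto simp: Theta_def)
  have "risk a t (d_c c) = (\<integral>\<^sup>+y. ennreal ((d_c c (t1 * fst y, t2 * snd y) - H_M t (t1 * fst y, t2 * snd y))\<^sup>2) \<partial>std_joint a)"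
    unfolding risk_def tt joint_eq_distr_std_joint[OF a t1 t2]
    by (subst nn_integral_distr) (auto simp: d_c_def H_M_def joint_def case_prod_beta)
  also have "\<dots> = (\<integral>\<^sup>+y. ennreal ((ln_selected t y - c)\<^sup>2) \<partial>std_joint a)"
  proof (rule nn_integral_cong_AE)
    show "AE y in std_joint a. ennreal ((d_c c (t1 * fst y, t2 * snd y) - H_M t (t1 * fst y, t2 * snd y))\<^sup>2)
        = ennreal ((ln_selected t y - c)\<^sup>2)"
      using AE_std_joint_pos[of a]
      by eventually_elim (use t1 t2 in \<open>auto simp: d_c_def H_M_def ln_selected_def tt ln_mult min_def\<close>)
  qed
  finally show ?thesis .
qed

lemma risk_d_c_eq:
  assumes a: "0 < a" and t: "t \<in> Theta"
  defines "m \<equiv> mean_ln_selected a t"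
  shows "risk a t (d_c c) = ennreal ((\<integral>y. (ln_selected t y - m)\<^sup>2 \<partial>std_joint a) + (c - m)\<^sup>2)"
proof -
  interpret P: prob_space "std_joint a" by (rule prob_space_std_joint[OF a])
  note I = integrable_ln_selected[OF a, of t] integrable_ln_selected_squared[OF a, of t]
  have expand: "(\<integral>y. (ln_selected t y - x)\<^sup>2 \<partial>std_joint a)
      = (\<integral>y. (ln_selected t y)\<^sup>2 \<partial>std_joint a) - 2 * x * m + x\<^sup>2" for x
    using I by (simp add: power2_diff P.prob_space m_def mean_ln_selected_def)
  have "integrable (std_joint a) (\<lambda>y. (ln_selected t y - c)\<^sup>2)"
    using I by (simp add: power2_diff)
  then have "risk a t (d_c c) = ennreal (\<integral>y. (ln_selected t y - c)\<^sup>2 \<partial>std_joint a)"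
    unfolding risk_d_c_eq_nn_integral[OF a t] by (rule nn_integral_eq_integral) auto
  also have "(\<integral>y. (ln_selected t y - c)\<^sup>2 \<partial>std_joint a) = (\<integral>y. (ln_selected t y - m)\<^sup>2 \<partial>std_joint a) + (c - m)\<^sup>2"
    unfolding expand by (simp add: power2_eq_square algebra_simps)
  finally show ?thesis .
qed

lemma risk_d_c_less_iff:
  assumes a: "0 < a" and t: "t \<in> Theta"
  shows "risk a t (d_c c) < risk a t (d_c b)
    \<longleftrightarrow> \<bar>c - mean_ln_selected a t\<bar> < \<bar>b - mean_ln_selected a t\<bar>"
proof -
  let ?m = "mean_ln_selected a t"
  let ?v = "\<integral>y. (ln_selected t y - ?m)\<^sup>2 \<partial>std_joint a"
  have "0 \<le> ?v" by simp
  then have "risk a t (d_c c) < risk a t (d_c b) \<longleftrightarrow> (c - ?m)\<^sup>2 < (b - ?m)\<^sup>2"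
    by (simp add: risk_d_c_eq[OF a t] ennreal_less_iff)
  also have "\<dots> \<longleftrightarrow> \<bar>c - ?m\<bar> < \<bar>b - ?m\<bar>"
    by (metis abs_ge_zero power2_abs power2_less_imp_less power2_strict_mono)
  finally show ?thesis .
qed

section \<open>Range of the risk centre\<close>

lemma ln_selected_bounds:
  assumes "0 < t1" "0 < t2" "0 < y1" "0 < y2"
  shows "ln (min y1 y2) \<le> ln_selected (t1, t2) (y1, y2)"
    and "ln_selected (t1, t2) (y1, y2) \<le> (if t1 \<le> t2 then ln y1 else ln y2)"
proof -
  show "ln (min y1 y2) \<le> ln_selected (t1, t2) (y1, y2)"
    using assms by (auto simp: ln_selected_def min_def)
  have "y2 < y1" if "t2 * y2 < t1 * y1" "t1 \<le> t2"
  proof -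
    have "t2 * y2 < t2 * y1"
      using that assms by (meson less_le_trans less_imp_le mult_right_mono)
    then show ?thesis using assms by simp
  qed
  moreover have "y1 < y2" if "t1 * y1 \<le> t2 * y2" "t2 < t1"
  proof -
    have "t2 * y1 < t2 * y2"
      using that assms mult_strict_right_mono[of t2 t1 y1] by linarith
    then show ?thesis using assms by simp
  qed
  ultimately show "ln_selected (t1, t2) (y1, y2) \<le> (if t1 \<le> t2 then ln y1 else ln y2)"
    using assms by (auto simp: ln_selected_def not_le)
qed

lemma integral_std_joint_ln_fst: "0 < a \<Longrightarrow> (\<integral>y. ln (fst y) \<partial>std_joint a) = c1 a"
  and integral_std_joint_ln_snd: "0 < a \<Longrightarrow> (\<integral>y. ln (snd y) \<partial>std_joint a) = c1 a"
  using integral_std_joint_fst[of a ln] integral_std_joint_snd[of a ln]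
    integrable_gamma_measure_ln integral_gamma_measure_ln
  by (simp_all add: c1_def)

lemma mean_ln_selected_le_c1:
  assumes a: "0 < a" and t: "t \<in> Theta"
  shows "mean_ln_selected a t \<le> c1 a"
proof -
  let ?u = "\<lambda>y. if fst t \<le> snd t then ln (fst y) else ln (snd y)"
  have "integrable (std_joint a) ?u"
    using integrable_std_joint_fst[OF a _ integrable_gamma_measure_ln[OF a]]
      integrable_std_joint_snd[OF a _ integrable_gamma_measure_ln[OF a]]
    by (cases "fst t \<le> snd t") simp_all
  moreover have "AE y in std_joint a. ln_selected t y \<le> ?u y"
    using AE_std_joint_pos[of a]
    by eventually_elim (use t ln_selected_bounds(2)[of "fst t" "snd t"] in \<open>auto simp: Theta_def\<close>)
  ultimately have "mean_ln_selected a t \<le> (\<integral>y. ?u y \<partial>std_joint a)"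
    unfolding mean_ln_selected_def by (intro integral_mono_AE integrable_ln_selected[OF a])
  also have "\<dots> = c1 a"
    using integral_std_joint_ln_fst[OF a] integral_std_joint_ln_snd[OF a] by (cases "fst t \<le> snd t") simp_all
  finally show ?thesis .
qed

lemma integral_std_joint_ln_min_le:
  assumes a: "0 < a" and t: "t \<in> Theta"
  shows "(\<integral>y. ln (min (fst y) (snd y)) \<partial>std_joint a) \<le> mean_ln_selected a t"
  unfolding mean_ln_selected_def
proof (intro integral_mono_AE integrable_ln_selected[OF a] integrable_std_joint_if_ln_bounded(1)[OF a])
  show "AE y in std_joint a. ln (min (fst y) (snd y)) \<le> ln_selected t y"
    using AE_std_joint_pos[of a]
    by eventually_elim (use t ln_selected_bounds(1)[of "fst t" "snd t"] in \<open>auto simp: Theta_def\<close>)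
qed (auto simp: min_def)

lemma mean_ln_selected_one_one:
  "mean_ln_selected a (1, 1) = (\<integral>y. ln (min (fst y) (snd y)) \<partial>std_joint a)"
  unfolding mean_ln_selected_def by (rule Bochner_Integration.integral_cong) (auto simp: ln_selected_def min_def)

lemma mean_ln_selected_LIMSEQ_c1:
  assumes a: "0 < a"
  shows "(\<lambda>n. mean_ln_selected a (1, real (Suc n))) \<longlonglongrightarrow> c1 a"
proof -
  have "(\<lambda>n. \<integral>y. ln_selected (1, real (Suc n)) y \<partial>std_joint a) \<longlonglongrightarrow> (\<integral>y. ln (fst y) \<partial>std_joint a)"
  proof (rule integral_dominated_convergence[where w = "\<lambda>y. \<bar>ln (fst y)\<bar> + \<bar>ln (snd y)\<bar>"])
    show "integrable (std_joint a) (\<lambda>y. \<bar>ln (fst y)\<bar> + \<bar>ln (snd y)\<bar>)"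
      using integrable_std_joint_fst[OF a _ integrable_gamma_measure_ln[OF a]]
        integrable_std_joint_snd[OF a _ integrable_gamma_measure_ln[OF a]] by auto
    show "AE y in std_joint a. norm (ln_selected (1, real (Suc n)) y) \<le> \<bar>ln (fst y)\<bar> + \<bar>ln (snd y)\<bar>" for n
      by (auto simp: ln_selected_def)
    show "AE y in std_joint a. (\<lambda>n. ln_selected (1, real (Suc n)) y) \<longlonglongrightarrow> ln (fst y)"
      using AE_std_joint_pos[of a]
    proof eventually_elim
      case (elim y)
      obtain N where N: "fst y / snd y \<le> real N" using real_arch_simple by blast
      have "fst y \<le> real (Suc n) * snd y" if "N \<le> n" for n
      proof -
        have "fst y / snd y \<le> real (Suc n)" using N that by linarith
        then show ?thesis using elim by (simp add: field_simps)
      qed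
      then have "\<forall>\<^sub>F n in sequentially. ln_selected (1, real (Suc n)) y = ln (fst y)"
        unfolding eventually_sequentially by (auto simp: ln_selected_def)
      then show ?case by (rule tendsto_eventually)
    qed
  qed (auto simp: joint_def)
  then show ?thesis using integral_std_joint_ln_fst[OF a] by (simp add: mean_ln_selected_def)
qed

lemma integral_gamma_measure_ln_times_tail:
  assumes a: "0 < a"
  shows "(\<integral>z. ln z * (1 - G_std a z) \<partial>gamma_measure a 1) = c3 a / 2"
proof -
  have "(\<integral>z. ln z * (1 - G_std a z) \<partial>gamma_measure a 1)
      = (\<integral>z. gamma_dens a 1 z *\<^sub>R (ln z * (1 - G_std a z)) \<partial>lborel)"
    unfolding gamma_measure_def using a by (intro integral_density) (auto simp: gamma_dens_nonneg)
  also have "\<dots> = (LBINT z:{0<..}. ln z * (1 - G_std a z) * g_std a z)"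
    unfolding set_lebesgue_integral_def
    by (rule Bochner_Integration.integral_cong) (auto simp: g_std_def gamma_dens_def indicator_def)
  finally show ?thesis by (simp add: c3_def)
qed

text \<open>Split \<open>ln (min y\<^sub>1 y\<^sub>2)\<close> according to which coordinate is the minimum; Fubini over the
  other coordinate turns each part into \<open>E[ln Y (1 - G\<^sub>\<alpha>(Y))]\<close>.\<close>
lemma integral_std_joint_ln_min:
  assumes a: "0 < a"
  shows "(\<integral>y. ln (min (fst y) (snd y)) \<partial>std_joint a) = c3 a"
proof -
  interpret G: prob_space "gamma_measure a 1" by (rule prob_space_gamma_measure_1[OF a])
  interpret PS: pair_sigma_finite "gamma_measure a 1" "gamma_measure a 1" ..
  have Q: "std_joint a = gamma_measure a 1 \<Otimes>\<^sub>M gamma_measure a 1"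
    using joint_eq_pair_measure[OF a, of 1 1] by simp
  let ?h = "\<lambda>z. ln z * (1 - G_std a z)"
  define f1 where "f1 y1 y2 = (if y1 \<le> y2 then ln y1 else 0)" for y1 y2 :: real
  define f2 where "f2 y1 y2 = (if y2 < y1 then ln y2 else 0)" for y1 y2 :: real
  have f1: "case_prod f1 \<in> borel_measurable (borel \<Otimes>\<^sub>M borel)"
    unfolding f1_def by measurable
  have f2: "case_prod f2 \<in> borel_measurable (borel \<Otimes>\<^sub>M borel)"
    unfolding f2_def by measurable
  have I1: "integrable (std_joint a) (case_prod f1)"
    by (rule integrable_std_joint_if_ln_bounded(1)[OF a f1]) (auto simp: f1_def)
  have I2: "integrable (std_joint a) (case_prod f2)"
    by (rule integrable_std_joint_if_ln_bounded(1)[OF a f2]) (auto simp: f2_def)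
  have "(\<lambda>y. ln (min (fst y) (snd y))) = (\<lambda>y. case_prod f1 y + case_prod f2 y)"
    by (auto simp: fun_eq_iff f1_def f2_def min_def)
  then have "(\<integral>y. ln (min (fst y) (snd y)) \<partial>std_joint a)
      = (\<integral>y. case_prod f1 y \<partial>std_joint a) + (\<integral>y. case_prod f2 y \<partial>std_joint a)"
    using I1 I2 by simp
  also have "(\<integral>y. case_prod f1 y \<partial>std_joint a) = (\<integral>z. ?h z \<partial>gamma_measure a 1)"
  proof -
    have "(\<integral>y. f1 x y \<partial>gamma_measure a 1) = (\<integral>y. ln x * indicator {x..} y \<partial>gamma_measure a 1)" for x
      by (rule Bochner_Integration.integral_cong) (auto simp: f1_def indicator_def)
    then have "(\<integral>y. f1 x y \<partial>gamma_measure a 1) = ?h x" for x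
      using measure_gamma_measure_atLeast[OF a, of x] by simp
    then show ?thesis using PS.integral_fst[of f1] I1 Q by simp
  qed
  also have "(\<integral>y. case_prod f2 y \<partial>std_joint a) = (\<integral>z. ?h z \<partial>gamma_measure a 1)"
  proof -
    have "(\<integral>x. f2 x y \<partial>gamma_measure a 1) = (\<integral>x. ln y * indicator {y<..} x \<partial>gamma_measure a 1)" for y
      by (rule Bochner_Integration.integral_cong) (auto simp: f2_def indicator_def)
    then have "(\<integral>x. f2 x y \<partial>gamma_measure a 1) = ?h y" for y
      using measure_gamma_measure_greaterThan[OF a, of y] by simp
    then show ?thesis using PS.integral_snd[of f2] I2 Q by simp
  qed
  finally show ?thesis using integral_gamma_measure_ln_times_tail[OF a] by simp
qed

lemma mean_ln_selected_bounds:
  assumes a: "0 < a" and t: "t \<in> Theta"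
  shows "c3 a \<le> mean_ln_selected a t" "mean_ln_selected a t \<le> c1 a"
  using integral_std_joint_ln_min_le[OF a t] integral_std_joint_ln_min[OF a] mean_ln_selected_le_c1[OF a t]
  by auto

section \<open>Admissibility\<close>

lemma risk_d_c_less_of_midpoint:
  assumes a: "0 < a" and t: "t \<in> Theta"
    and mid: "(b < c \<and> (b + c) / 2 < mean_ln_selected a t) \<or> (c < b \<and> mean_ln_selected a t < (b + c) / 2)"
  shows "risk a t (d_c c) < risk a t (d_c b)"
  unfolding risk_d_c_less_iff[OF a t] using mid by auto

lemma risk_d_c_less_outside:
  assumes a: "0 < a" and bc: "(b < c \<and> c \<le> c3 a) \<or> (c1 a \<le> c \<and> c < b)" and t: "t \<in> Theta"
  shows "risk a t (d_c c) < risk a t (d_c b)"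
  using bc mean_ln_selected_bounds[OF a t] by (intro risk_d_c_less_of_midpoint[OF a t]) auto

lemma inadmissible_d_c:
  assumes a: "0 < a" and c: "c < c3 a \<or> c1 a < c"
  shows "inadmissible a (d_c c)"
proof -
  obtain b where "(c < b \<and> b \<le> c3 a) \<or> (c1 a \<le> b \<and> b < c)"
    using c by (metis order.refl)
  moreover have "(1, 1) \<in> Theta" by (simp add: Theta_def)
  ultimately have "dominates a (d_c b) (d_c c)"
    unfolding dominates_def using risk_d_c_less_outside[OF a] by (auto intro: less_imp_le)
  moreover have "estimator (d_c b)"
    unfolding estimator_def d_c_def by measurable
  ultimately show ?thesis unfolding inadmissible_def by blast
qed

lemma admissible_within_M1_d_c:
  assumes a: "0 < a" and c: "c \<in> {c3 a .. c1 a}"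
  shows "admissible_within_M1 a (d_c c)"
  unfolding admissible_within_M1_def
proof (intro conjI notI)
  show "d_c c \<in> M1" by (simp add: M1_def)
  assume "\<exists>d'\<in>M1. dominates a d' (d_c c)"
  then obtain b where dom: "dominates a (d_c b) (d_c c)" by (auto simp: M1_def)
  have "\<exists>t\<in>Theta. risk a t (d_c c) < risk a t (d_c b)"
  proof (cases b c rule: linorder_cases)
    case less
    then have "(b + c) / 2 < c1 a" using c by auto
    from order_tendstoD(1)[OF mean_ln_selected_LIMSEQ_c1[OF a] this]
    obtain n where "(b + c) / 2 < mean_ln_selected a (1, real (Suc n))"
      by (auto simp: eventually_sequentially)
    moreover have "(1, real (Suc n)) \<in> Theta" by (simp add: Theta_def)
    ultimately show ?thesis
      using less risk_d_c_less_of_midpoint[OF a] by blast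
  next
    case greater
    have "mean_ln_selected a (1, 1) = c3 a"
      using mean_ln_selected_one_one integral_std_joint_ln_min[OF a] by simp
    moreover have "(1, 1) \<in> Theta" by (simp add: Theta_def)
    ultimately show ?thesis
      using greater c risk_d_c_less_of_midpoint[OF a, of "(1, 1)" b c] by auto
  qed (use dom in \<open>auto simp: dominates_def\<close>)
  then show False
    using dom by (auto simp: dominates_def not_le[symmetric])
qed

theorem theorem3p1:
  fixes \<alpha> :: real
  assumes "0 < \<alpha>"
  shows "(\<forall>c \<in> {c3 \<alpha> .. c1 \<alpha>}. admissible_within_M1 \<alpha> (d_c c))
    \<and> (\<forall>c. c < c3 \<alpha> \<or> c1 \<alpha> < c \<longrightarrow> inadmissible \<alpha> (d_c c))
    \<and> (\<forall>b c. (b < c \<and> c \<le> c3 \<alpha>) \<or> (c1 \<alpha> \<le> c \<and> c < b) \<longrightarrow>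
          (\<forall>\<theta>\<in>Theta. risk \<alpha> \<theta> (d_c c) < risk \<alpha> \<theta> (d_c b)))"
  using admissible_within_M1_d_c[OF assms] inadmissible_d_c[OF assms] risk_d_c_less_outside[OF assms]
  by blast

end
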